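(* Let $X$ be a quasi-Banach function space over $\mathbf{R}^d$ with the Fatou property and let $T$ be a non-degenerate (sub)linear operator for which $T:X\to X_{\mathrm{weak}}$ is bounded. Then $X\in A$ with \[[X]_A\le C^{-2}\|T\|_{X\to X_{\mathrm{weak}}}^2,\] where $C$ is the constant in the definition of non-degeneracy.
   Context: Cubes are axis-parallel cubes in $\mathbf{R}^d$. A quasi-Banach function space over $\mathbf{R}^d$ is a complete quasi-normed space $X\subseteq L^0(\mathbf{R}^d)$ with the ideal property (if $f\in X$, $|g|\le|f|$ then $g\in X$, $\|g\|_X\le\|f\|_X$) and the saturation property (every set of positive measure contains a subset $F$ of positive measure with $\mathbf{1}_F\in X$). Köthe dual: $\|g\|_{X'}=\sup_{\|f\|_X=1}\int|fg|$. Fatou property: $0\le f_n\uparrow f$ a.e., $\sup\|f_n\|_X<\infty$ imply $f\in X$, $\|f\|_X=\sup\|f_n\|_X$. $X_{\mathrm{weak}}$: $f$ with $\mathbf{1}_{\{|f|>\lambda\}}\in X$ for all $\lambda>0$, $\|f\|_{X_{\mathrm{weak}}}=\sup_\lambda\lambda\|\mathbf{1}_{\{|f|>\lambda\}}\|_X<\infty$. $X\in A$: $\mathbf{1}_Q\in X$ and $\mathbf{1}_Q\in X'$ for all cubes $Q$ and $[X]_A=\sup_Q|Q|^{-1}\|\mathbf{1}_Q\|_X\|\mathbf{1}_Q\|_{X'}<\infty$. An operator $T$ is non-degenerate if there is $C>0$ such that for every $\ell>0$ there is $x_\ell\in\mathbf{R}^d$ such that for all cubes $Q$ of side length $\ell$,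 all $0\le f\in L^1(Q)$ and all $x\in(Q+x_\ell)\cup(Q-x_\ell)$: $|Tf(x)|\ge C\frac1{|Q|}\int_Qf$. *)

theory Defs
  imports "HOL-Analysis.Analysis"
begin

text \<open>Functions in L0(R^d) are represented by real-valued Lebesgue-measurable functions
  on a Euclidean space 'a (the dimension d = DIM('a)); the quasi-Banach function space is a
  set X of such functions together with its quasi-norm q.\<close>

definition qbfs :: "('a::euclidean_space \<Rightarrow> real) set \<Rightarrow> (('a \<Rightarrow> real) \<Rightarrow> real) \<Rightarrow> bool" where
  "qbfs X q \<longleftrightarrow>
     X \<subseteq> borel_measurable lebesgue \<and>
     (\<lambda>x. 0) \<in> X \<and>
     (\<forall>f\<in>X. \<forall>g\<in>X. (\<lambda>x. f x + g x) \<in> X) \<and>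
     (\<forall>f\<in>X. \<forall>c. (\<lambda>x. c * f x) \<in> X) \<and>
     (\<forall>f\<in>X. 0 \<le> q f \<and> (q f = 0 \<longleftrightarrow> (AE x in lebesgue. f x = 0))) \<and>
     (\<forall>f\<in>X. \<forall>c. q (\<lambda>x. c * f x) = \<bar>c\<bar> * q f) \<and>
     (\<exists>K\<ge>1. \<forall>f\<in>X. \<forall>g\<in>X. q (\<lambda>x. f x + g x) \<le> K * (q f + q g)) \<and>
     (\<forall>u::nat \<Rightarrow> 'a \<Rightarrow> real. (\<forall>n. u n \<in> X) \<and>
        (\<forall>e>0. \<exists>N. \<forall>m\<ge>N. \<forall>n\<ge>N. q (\<lambda>x. u m x - u n x) < e)
        \<longrightarrow> (\<exists>f\<in>X. (\<lambda>n. q (\<lambda>x. u n x - f x)) \<longlonglongrightarrow> 0)) \<and>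
     (\<forall>f\<in>X. \<forall>g\<in>borel_measurable lebesgue.
        (AE x in lebesgue. \<bar>g x\<bar> \<le> \<bar>f x\<bar>) \<longrightarrow> g \<in> X \<and> q g \<le> q f) \<and>
     (\<forall>E\<in>sets lebesgue. 0 < emeasure lebesgue E \<longrightarrow>
        (\<exists>F\<in>sets lebesgue. F \<subseteq> E \<and> 0 < emeasure lebesgue F \<and> indicator F \<in> X))"

definition fatou_property :: "('a::euclidean_space \<Rightarrow> real) set \<Rightarrow> (('a \<Rightarrow> real) \<Rightarrow> real) \<Rightarrow> bool" where
  "fatou_property X q \<longleftrightarrow>
     (\<forall>(u::nat \<Rightarrow> 'a \<Rightarrow> real) f.
        (\<forall>n. u n \<in> X) \<and> f \<in> borel_measurable lebesgue \<and>
        (AE x in lebesgue. (\<forall>n. 0 \<le> u n x \<and> u n x \<le> u (Suc n) x) \<and> (\<lambda>n. u n x) \<longlonglongrightarrow> f x) \<and>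
        bdd_above (range (\<lambda>n. q (u n)))
        \<longrightarrow> f \<in> X \<and> q f = (SUP n. q (u n)))"

definition kothe_norm :: "('a::euclidean_space \<Rightarrow> real) set \<Rightarrow> (('a \<Rightarrow> real) \<Rightarrow> real) \<Rightarrow> ('a \<Rightarrow> real) \<Rightarrow> ennreal" where
  "kothe_norm X q g = (SUP f\<in>{f\<in>X. q f = 1}. \<integral>\<^sup>+ x. ennreal \<bar>f x * g x\<bar> \<partial>lebesgue)"

definition in_kothe_dual :: "('a::euclidean_space \<Rightarrow> real) set \<Rightarrow> (('a \<Rightarrow> real) \<Rightarrow> real) \<Rightarrow> ('a \<Rightarrow> real) \<Rightarrow> bool" where
  "in_kothe_dual X q g \<longleftrightarrow> g \<in> borel_measurable lebesgue \<and> kothe_norm X q g < \<infinity>"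

definition weak_norm :: "('a::euclidean_space \<Rightarrow> real) set \<Rightarrow> (('a \<Rightarrow> real) \<Rightarrow> real) \<Rightarrow> ('a \<Rightarrow> real) \<Rightarrow> ennreal" where
  "weak_norm X q f = (SUP l\<in>{0<..}. ennreal (l * q (indicator {x. l < \<bar>f x\<bar>})))"

definition in_weak :: "('a::euclidean_space \<Rightarrow> real) set \<Rightarrow> (('a \<Rightarrow> real) \<Rightarrow> real) \<Rightarrow> ('a \<Rightarrow> real) \<Rightarrow> bool" where
  "in_weak X q f \<longleftrightarrow> f \<in> borel_measurable lebesgue \<and>
     (\<forall>l>0. indicator {x. l < \<bar>f x\<bar>} \<in> X) \<and> weak_norm X q f < \<infinity>"

definition cube_side :: "'a::euclidean_space set \<Rightarrow> real \<Rightarrow> bool" where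
  "cube_side Q l \<longleftrightarrow> 0 < l \<and> (\<exists>a. Q = cbox a (a + l *\<^sub>R One))"

definition cube :: "'a::euclidean_space set \<Rightarrow> bool" where
  "cube Q \<longleftrightarrow> (\<exists>l. cube_side Q l)"

definition A_const :: "('a::euclidean_space \<Rightarrow> real) set \<Rightarrow> (('a \<Rightarrow> real) \<Rightarrow> real) \<Rightarrow> ennreal" where
  "A_const X q = (SUP Q\<in>{Q. cube Q}.
      ennreal (q (indicator Q) / measure lebesgue Q) * kothe_norm X q (indicator Q))"

definition in_class_A :: "('a::euclidean_space \<Rightarrow> real) set \<Rightarrow> (('a \<Rightarrow> real) \<Rightarrow> real) \<Rightarrow> bool" where
  "in_class_A X q \<longleftrightarrow>
     (\<forall>Q. cube Q \<longrightarrow> indicator Q \<in> X \<and> in_kothe_dual X q (indicator Q)) \<and> A_const X q < \<infinity>"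

definition sublinear_on :: "('a::euclidean_space \<Rightarrow> real) set \<Rightarrow> (('a \<Rightarrow> real) \<Rightarrow> ('a \<Rightarrow> real)) \<Rightarrow> bool" where
  "sublinear_on X T \<longleftrightarrow>
     (\<forall>f\<in>X. \<forall>g\<in>X. AE x in lebesgue. \<bar>T (\<lambda>y. f y + g y) x\<bar> \<le> \<bar>T f x\<bar> + \<bar>T g x\<bar>) \<and>
     (\<forall>f\<in>X. \<forall>c. AE x in lebesgue. \<bar>T (\<lambda>y. c * f y) x\<bar> = \<bar>c\<bar> * \<bar>T f x\<bar>)"

definition weak_bound :: "('a::euclidean_space \<Rightarrow> real) set \<Rightarrow> (('a \<Rightarrow> real) \<Rightarrow> real) \<Rightarrow>
    (('a \<Rightarrow> real) \<Rightarrow> ('a \<Rightarrow> real)) \<Rightarrow> real \<Rightarrow> bool" where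
  "weak_bound X q T M \<longleftrightarrow> 0 \<le> M \<and>
     (\<forall>f\<in>X. in_weak X q (T f) \<and> weak_norm X q (T f) \<le> ennreal (M * q f))"

definition bounded_to_weak :: "('a::euclidean_space \<Rightarrow> real) set \<Rightarrow> (('a \<Rightarrow> real) \<Rightarrow> real) \<Rightarrow>
    (('a \<Rightarrow> real) \<Rightarrow> ('a \<Rightarrow> real)) \<Rightarrow> bool" where
  "bounded_to_weak X q T \<longleftrightarrow> (\<exists>M. weak_bound X q T M)"

definition op_norm_weak :: "('a::euclidean_space \<Rightarrow> real) set \<Rightarrow> (('a \<Rightarrow> real) \<Rightarrow> real) \<Rightarrow>
    (('a \<Rightarrow> real) \<Rightarrow> ('a \<Rightarrow> real)) \<Rightarrow> real" where
  "op_norm_weak X q T = Inf {M. weak_bound X q T M}"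

definition nondegenerate :: "(('a::euclidean_space \<Rightarrow> real) \<Rightarrow> ('a \<Rightarrow> real)) \<Rightarrow> real \<Rightarrow> bool" where
  "nondegenerate T C \<longleftrightarrow> 0 < C \<and>
     (\<forall>l>0. \<exists>xl. \<forall>Q f x.
        cube_side Q l \<and> integrable lebesgue f \<and> (\<forall>y. 0 \<le> f y) \<and> (\<forall>y. y \<notin> Q \<longrightarrow> f y = 0) \<and>
        x \<in> ((\<lambda>y. y + xl) ` Q \<union> (\<lambda>y. y - xl) ` Q)
        \<longrightarrow> C * ((\<integral>y. f y \<partial>lebesgue) / measure lebesgue Q) \<le> \<bar>T f x\<bar>)"

end

theory Submission
  imports Defs
begin

text \<open>Non-degeneracy provides, for every cube Q, a translate Q' of Q such that
  |T f| >= C <f>_Q on Q' for every f >= 0 supported in Q, and symmetrically with Q and Q'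
  exchanged. The weak-type bound turns this pointwise lower bound into norm inequalities.
  Applied to 1_F for a subset F of Q given by saturation, it shows 1_Q' in X; applied to 1_Q',
  it gives 1_Q in X and C ||1_Q|| <= ||T|| ||1_Q'||; applied to truncations of |f| 1_Q, it gives
  C <|f|>_Q ||1_Q'|| <= ||T|| ||f||, that is ||1_Q||_X' <= ||T|| |Q| / (C ||1_Q'||).
  Multiplying the last two estimates yields ||1_Q|| ||1_Q||_X' <= ||T||^2 |Q| / C^2.\<close>

lemma measure_cube_side:
  fixes Q :: "'a::euclidean_space set"
  assumes "cube_side Q l"
  shows "measure lebesgue Q = l ^ DIM('a)"
proof -
  obtain a where l: "0 < l" and Q: "Q = cbox a (a + l *\<^sub>R One)"
    using assms unfolding cube_side_def by auto
  then show ?thesis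
    by (simp add: measure_lborel_cbox_eq[symmetric] inner_simps prod_constant)
qed

lemma cube_side_lebesgue:
  fixes Q :: "'a::euclidean_space set"
  assumes "cube_side Q l"
  shows "Q \<in> sets lebesgue" "emeasure lebesgue Q < \<infinity>" "0 < measure lebesgue Q"
    and "0 < emeasure lebesgue Q"
proof -
  obtain a where l: "0 < l" and Q: "Q = cbox a (a + l *\<^sub>R One)"
    using assms unfolding cube_side_def by auto
  then show "Q \<in> sets lebesgue" "emeasure lebesgue Q < \<infinity>"
    using emeasure_lborel_cbox_finite[of a "a + l *\<^sub>R One"] by auto
  show "0 < measure lebesgue Q" using measure_cube_side[OF assms] l by simp
  moreover have "emeasure lebesgue Q = ennreal (measure lebesgue Q)"
    using \<open>emeasure lebesgue Q < \<infinity>\<close> by (intro emeasure_eq_ennreal_measure) auto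
  ultimately show "0 < emeasure lebesgue Q" by simp
qed

lemma cube_side_translation:
  assumes "cube_side Q l"
  shows "cube_side ((\<lambda>y. y + v) ` Q) l"
proof -
  obtain a where l: "0 < l" and Q: "Q = cbox a (a + l *\<^sub>R One)"
    using assms unfolding cube_side_def by auto
  then have "(\<lambda>y. y + v) ` Q = cbox (v + a) (v + (a + l *\<^sub>R One))"
    unfolding Q cbox_translation by (simp add: add.commute)
  then show ?thesis
    using l unfolding cube_side_def by (intro conjI exI[of _ "v + a"]) (auto simp: add_ac)
qed

lemma qbfs_measurable: "qbfs X q \<Longrightarrow> f \<in> X \<Longrightarrow> f \<in> borel_measurable lebesgue"
  unfolding qbfs_def by blast

lemma qbfs_nonneg: "qbfs X q \<Longrightarrow> f \<in> X \<Longrightarrow> 0 \<le> q f"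
  unfolding qbfs_def by blast

lemma qbfs_ideal:
  "qbfs X q \<Longrightarrow> f \<in> X \<Longrightarrow> g \<in> borel_measurable lebesgue \<Longrightarrow>
    (AE x in lebesgue. \<bar>g x\<bar> \<le> \<bar>f x\<bar>) \<Longrightarrow> g \<in> X \<and> q g \<le> q f"
  unfolding qbfs_def by blast

lemma qbfs_saturation:
  "qbfs X q \<Longrightarrow> E \<in> sets lebesgue \<Longrightarrow> 0 < emeasure lebesgue E \<Longrightarrow>
    \<exists>F\<in>sets lebesgue. F \<subseteq> E \<and> 0 < emeasure lebesgue F \<and> indicator F \<in> X"
  unfolding qbfs_def by blast

lemma qbfs_indicator_pos:
  assumes X: "qbfs X q" and E: "indicator E \<in> X" "E \<in> sets lebesgue" "0 < emeasure lebesgue E"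
  shows "0 < q (indicator E)"
proof (rule ccontr)
  assume "\<not> 0 < q (indicator E)"
  then have "q (indicator E) = 0" using qbfs_nonneg[OF X E(1)] by simp
  then have "AE x in lebesgue. x \<notin> E"
    using X E(1) unfolding qbfs_def by (auto simp: indicator_eq_0_iff)
  then have "emeasure lebesgue E = 0" using AE_iff_measurable[OF E(2)] by auto
  with E(3) show False by simp
qed

lemma weak_bound_indicator_le:
  assumes X: "qbfs X q" and T: "weak_bound X q T M" and f: "f \<in> X"
    and E: "E \<in> sets lebesgue" and c: "0 < c" and Tf: "\<forall>x\<in>E. c \<le> \<bar>T f x\<bar>"
  shows "indicator E \<in> X \<and> c * q (indicator E) \<le> M * q f"
proof -
  have Tf_weak: "in_weak X q (T f)" and Tf_norm: "weak_norm X q (T f) \<le> ennreal (M * q f)"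
    using T f unfolding weak_bound_def by auto
  have Mqf: "0 \<le> M * q f" using T qbfs_nonneg[OF X f] unfolding weak_bound_def by simp
  \<comment> \<open>\<open>E\<close> lies in every level set \<open>{|T f| > t}\<close> with \<open>t < c\<close>, though not necessarily in
    \<open>{|T f| > c}\<close>; hence the limit \<open>t \<rightarrow> c\<close>.\<close>
  have level: "indicator E \<in> X \<and> t * q (indicator E) \<le> M * q f" if "0 < t" "t < c" for t
  proof -
    let ?S = "{x. t < \<bar>T f x\<bar>}"
    have S: "indicator ?S \<in> X" using Tf_weak \<open>0 < t\<close> unfolding in_weak_def by auto
    have "E \<subseteq> ?S" using Tf \<open>t < c\<close> by force
    then have "AE x in lebesgue. \<bar>indicator E x :: real\<bar> \<le> \<bar>indicator ?S x\<bar>"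
      by (auto simp: indicator_def)
    then have EX: "indicator E \<in> X" and ES: "q (indicator E) \<le> q (indicator ?S)"
      using qbfs_ideal[OF X S, of "indicator E"] E by auto
    have "ennreal (t * q (indicator ?S)) \<le> weak_norm X q (T f)"
      unfolding weak_norm_def using \<open>0 < t\<close> by (intro SUP_upper2[of t]) auto
    also note Tf_norm
    finally have "t * q (indicator ?S) \<le> M * q f"
      using Mqf by (simp add: ennreal_le_iff)
    with ES \<open>0 < t\<close> EX show ?thesis by (meson mult_left_mono order.trans less_imp_le)
  qed
  have "c * q (indicator E) \<le> M * q f"
  proof (rule field_le_mult_one_interval)
    fix z :: real assume "0 < z" "z < 1"
    then show "z * (c * q (indicator E)) \<le> M * q f"
      using level[of "z * c"] c by (simp add: mult.assoc)
  qed
  with level[of "c / 2"] c show ?thesis by simp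
qed

lemma weak_bound_op_norm_weak:
  assumes X: "qbfs X q" and T: "bounded_to_weak X q T"
  shows "weak_bound X q T (op_norm_weak X q T)"
proof -
  let ?S = "{M. weak_bound X q T M}"
  obtain M0 where M0: "weak_bound X q T M0" using T unfolding bounded_to_weak_def by blast
  then have S_ne: "?S \<noteq> {}" by blast
  have m: "op_norm_weak X q T = Inf ?S" unfolding op_norm_weak_def ..
  have m_nonneg: "0 \<le> op_norm_weak X q T"
    unfolding m using S_ne by (intro cInf_greatest) (auto simp: weak_bound_def)
  have "weak_norm X q (T f) \<le> ennreal (op_norm_weak X q T * q f)" if f: "f \<in> X" for f
  proof -
    have qf: "0 \<le> q f" using qbfs_nonneg[OF X f] .
    obtain w where w: "weak_norm X q (T f) = ennreal w" "0 \<le> w"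
      using M0 f unfolding weak_bound_def in_weak_def by (cases "weak_norm X q (T f)") auto
    have w_le: "w \<le> M * q f" if "M \<in> ?S" for M
      using that f w qf unfolding weak_bound_def by auto
    have "w \<le> op_norm_weak X q T * q f"
    proof (cases "q f = 0")
      case True
      then show ?thesis using w_le[of M0] M0 by simp
    next
      case False
      then have "w / q f \<le> Inf ?S"
        using qf w_le S_ne by (intro cInf_greatest) (auto simp: divide_le_eq mult.commute)
      then show ?thesis unfolding m using False qf by (simp add: divide_le_eq mult.commute)
    qed
    then show ?thesis using w by simp
  qed
  then show ?thesis using M0 m_nonneg unfolding weak_bound_def by blast
qed

lemma integrable_truncation:
  fixes f :: "'a \<Rightarrow> real"
  assumes f: "f \<in> borel_measurable M" and Q: "Q \<in> sets M" "emeasure M Q < \<infinity>"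
  shows "integrable M (\<lambda>x. min \<bar>f x\<bar> c * indicator Q x)"
proof (rule Bochner_Integration.integrable_bound)
  show "integrable M (\<lambda>x. \<bar>c\<bar> * indicator Q x :: real)" using Q by simp
  show "AE x in M. norm (min \<bar>f x\<bar> c * indicator Q x) \<le> norm (\<bar>c\<bar> * indicator Q x :: real)"
    by (auto simp: indicator_def)
qed (use f Q in measurable)

lemma nn_integral_indicator_le_truncations:
  fixes f :: "'a \<Rightarrow> real"
  assumes f: "f \<in> borel_measurable M" and Q: "Q \<in> sets M" "emeasure M Q < \<infinity>"
    and bound: "\<And>n::nat. (\<integral>x. min \<bar>f x\<bar> n * indicator Q x \<partial>M) \<le> B"
  shows "(\<integral>\<^sup>+ x. ennreal \<bar>f x * indicator Q x\<bar> \<partial>M) \<le> ennreal B"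
proof -
  define h where "h n x = min \<bar>f x\<bar> (real n) * indicator Q x" for n x
  have h_meas: "h n \<in> borel_measurable M" for n
    unfolding h_def using f Q by measurable
  have h_int: "integrable M (h n)" for n
    unfolding h_def using f Q by (rule integrable_truncation)
  have h_SUP: "ennreal \<bar>f x * indicator Q x\<bar> = (SUP n. ennreal (h n x))" for x
  proof (rule antisym)
    obtain N :: nat where "\<bar>f x\<bar> \<le> real N" using real_arch_simple by blast
    then have "ennreal \<bar>f x * indicator Q x\<bar> = ennreal (h N x)"
      by (auto simp: h_def indicator_def abs_mult)
    then show "ennreal \<bar>f x * indicator Q x\<bar> \<le> (SUP n. ennreal (h n x))"
      by (metis SUP_upper UNIV_I)
    show "(SUP n. ennreal (h n x)) \<le> ennreal \<bar>f x * indicator Q x\<bar>"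
      by (intro SUP_least ennreal_leI) (auto simp: h_def indicator_def abs_mult)
  qed
  have h_inc: "incseq (\<lambda>n x. ennreal (h n x))"
    unfolding incseq_def le_fun_def by (auto intro!: ennreal_leI simp: h_def indicator_def)
  have "(\<integral>\<^sup>+ x. ennreal \<bar>f x * indicator Q x\<bar> \<partial>M) = (SUP n. \<integral>\<^sup>+ x. ennreal (h n x) \<partial>M)"
    unfolding h_SUP using h_meas by (intro nn_integral_monotone_convergence_SUP[OF h_inc]) auto
  also have "\<dots> = (SUP n. ennreal (\<integral>x. h n x \<partial>M))"
    by (intro SUP_cong refl nn_integral_eq_integral h_int) (auto simp: h_def)
  also have "\<dots> \<le> ennreal B"
    using bound by (intro SUP_least ennreal_leI) (simp add: h_def)
  finally show ?thesis .
qed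

definition dominates_averages :: "(('a::euclidean_space \<Rightarrow> real) \<Rightarrow> ('a \<Rightarrow> real)) \<Rightarrow> real \<Rightarrow> 'a set \<Rightarrow> 'a set \<Rightarrow> bool" where
  "dominates_averages T C Q E \<longleftrightarrow>
     (\<forall>f x. integrable lebesgue f \<and> (\<forall>y. 0 \<le> f y) \<and> (\<forall>y. y \<notin> Q \<longrightarrow> f y = 0) \<and> x \<in> E
        \<longrightarrow> C * ((\<integral>y. f y \<partial>lebesgue) / measure lebesgue Q) \<le> \<bar>T f x\<bar>)"

lemma nondegenerate_dominates_averages:
  assumes T: "nondegenerate T C" and Q: "cube_side Q l"
  obtains v where "dominates_averages T C Q ((\<lambda>y. y + v) ` Q)"
    and "dominates_averages T C ((\<lambda>y. y + v) ` Q) Q"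
proof -
  have "0 < l" using Q unfolding cube_side_def by simp
  then obtain v where v: "\<And>Q f x. cube_side Q l \<Longrightarrow> integrable lebesgue f \<Longrightarrow> (\<forall>y. 0 \<le> f y) \<Longrightarrow>
      (\<forall>y. y \<notin> Q \<longrightarrow> f y = 0) \<Longrightarrow> x \<in> (\<lambda>y. y + v) ` Q \<union> (\<lambda>y. y - v) ` Q \<Longrightarrow>
      C * ((\<integral>y. f y \<partial>lebesgue) / measure lebesgue Q) \<le> \<bar>T f x\<bar>"
    using T unfolding nondegenerate_def by metis
  have "Q = (\<lambda>y. y - v) ` (\<lambda>y. y + v) ` Q" by (simp add: image_image)
  then show ?thesis
    using v[OF Q] v[OF cube_side_translation[OF Q, of v]]
    by (intro that) (auto simp: dominates_averages_def)
qed

lemma dominates_averages_weak_bound: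
  assumes X: "qbfs X q" and T: "weak_bound X q T M" and D: "dominates_averages T C Q E"
    and E: "E \<in> sets lebesgue" and C: "0 < C" and Q: "0 < measure lebesgue Q"
    and f: "f \<in> X" "integrable lebesgue f" "\<forall>y. 0 \<le> f y" "\<forall>y. y \<notin> Q \<longrightarrow> f y = 0"
    and f_pos: "0 < (\<integral>y. f y \<partial>lebesgue)"
  shows "indicator E \<in> X \<and> C * ((\<integral>y. f y \<partial>lebesgue) / measure lebesgue Q) * q (indicator E) \<le> M * q f"
proof (rule weak_bound_indicator_le[OF X T f(1) E])
  show "0 < C * ((\<integral>y. f y \<partial>lebesgue) / measure lebesgue Q)" using C Q f_pos by simp
  show "\<forall>x\<in>E. C * ((\<integral>y. f y \<partial>lebesgue) / measure lebesgue Q) \<le> \<bar>T f x\<bar>"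
    using D f unfolding dominates_averages_def by blast
qed

lemma dominates_averages_indicator_in:
  assumes X: "qbfs X q" and T: "weak_bound X q T M" and D: "dominates_averages T C Q E"
    and E: "E \<in> sets lebesgue" and C: "0 < C"
    and Q: "Q \<in> sets lebesgue" "emeasure lebesgue Q < \<infinity>" "0 < measure lebesgue Q"
  shows "indicator E \<in> X"
proof -
  have "emeasure lebesgue Q = ennreal (measure lebesgue Q)"
    using Q(2) by (intro emeasure_eq_ennreal_measure) auto
  with Q(3) have "0 < emeasure lebesgue Q" by simp
  then obtain F where F: "F \<in> sets lebesgue" "F \<subseteq> Q" "0 < emeasure lebesgue F" "indicator F \<in> X"
    using qbfs_saturation[OF X Q(1)] by blast
  have F_fin: "emeasure lebesgue F < \<infinity>" using emeasure_mono[OF F(2) Q(1)] Q(2) by simp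
  then have "emeasure lebesgue F = ennreal (measure lebesgue F)"
    by (intro emeasure_eq_ennreal_measure) auto
  with F(3) have "0 < measure lebesgue F" by simp
  moreover have "(\<integral>y. indicator F y \<partial>lebesgue) = measure lebesgue F" using F(1) F_fin by simp
  ultimately have F_avg: "0 < (\<integral>y. indicator F y \<partial>lebesgue :: real)" by simp
  have F_int: "integrable lebesgue (indicator F :: _ \<Rightarrow> real)" using F(1) F_fin by simp
  have "\<forall>y. 0 \<le> (indicator F y :: real)" "\<forall>y. y \<notin> Q \<longrightarrow> (indicator F y :: real) = 0"
    using F(2) by (auto simp: indicator_def)
  then show ?thesis
    using dominates_averages_weak_bound[OF X T D E C Q(3) F(4) F_int _ _ F_avg] by blast
qed

lemma dominates_averages_kothe_norm_le:
  assumes X: "qbfs X q" and T: "weak_bound X q T M" and D: "dominates_averages T C Q E"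
    and E: "E \<in> sets lebesgue" "0 < q (indicator E)" and C: "0 < C"
    and Q: "Q \<in> sets lebesgue" "emeasure lebesgue Q < \<infinity>" "0 < measure lebesgue Q"
  shows "kothe_norm X q (indicator Q) \<le> ennreal (M * measure lebesgue Q / (C * q (indicator E)))"
    (is "_ \<le> ennreal ?B")
proof -
  have M: "0 \<le> M" using T unfolding weak_bound_def by simp
  have "(\<integral>\<^sup>+ x. ennreal \<bar>f x * indicator Q x\<bar> \<partial>lebesgue) \<le> ennreal ?B" if f: "f \<in> X" "q f = 1" for f
  proof (rule nn_integral_indicator_le_truncations[OF qbfs_measurable[OF X f(1)] Q(1,2)])
    fix n :: nat
    define h where "h x = min \<bar>f x\<bar> n * indicator Q x" for x
    have h_meas: "h \<in> borel_measurable lebesgue"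
      unfolding h_def using qbfs_measurable[OF X f(1)] Q(1) by measurable
    have h: "h \<in> X" "q h \<le> 1"
      using qbfs_ideal[OF X f(1) h_meas] f(2) by (auto simp: h_def indicator_def)
    have h_supp: "\<forall>y. 0 \<le> h y" "\<forall>y. y \<notin> Q \<longrightarrow> h y = 0" by (auto simp: h_def)
    have h_int: "integrable lebesgue h"
      unfolding h_def using qbfs_measurable[OF X f(1)] Q(1,2) by (rule integrable_truncation)
    have B: "0 \<le> ?B" using M C Q(3) E(2) by simp
    have "(\<integral>x. h x \<partial>lebesgue) \<le> ?B"
    proof (cases "0 < (\<integral>x. h x \<partial>lebesgue)")
      case True
      have "C * ((\<integral>x. h x \<partial>lebesgue) / measure lebesgue Q) * q (indicator E) \<le> M * q h"
        using dominates_averages_weak_bound[OF X T D E(1) C Q(3) h(1) h_int h_supp True] by blast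
      also have "\<dots> \<le> M" using h(2) M by (simp add: mult_left_le)
      finally show ?thesis using C Q(3) E(2) by (simp add: field_simps)
    qed (use B in linarith)
    then show "(\<integral>x. min \<bar>f x\<bar> n * indicator Q x \<partial>lebesgue) \<le> ?B" by (simp add: h_def)
  qed
  then show ?thesis unfolding kothe_norm_def by (intro SUP_least) auto
qed

lemma cube_side_A_bound:
  assumes X: "qbfs X q" and T: "weak_bound X q T M" and N: "nondegenerate T C"
    and Q: "cube_side Q l"
  shows "indicator Q \<in> X \<and> in_kothe_dual X q (indicator Q) \<and>
    ennreal (q (indicator Q) / measure lebesgue Q) * kothe_norm X q (indicator Q) \<le> ennreal (M\<^sup>2 / C\<^sup>2)"
proof -
  have C: "0 < C" using N unfolding nondegenerate_def by simp
  have M: "0 \<le> M" using T unfolding weak_bound_def by simp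
  obtain v where D: "dominates_averages T C Q ((\<lambda>y. y + v) ` Q)"
    and D': "dominates_averages T C ((\<lambda>y. y + v) ` Q) Q"
    using nondegenerate_dominates_averages[OF N Q] by blast
  define Q' where "Q' = (\<lambda>y. y + v) ` Q"
  note cQ = cube_side_lebesgue[OF Q]
    and cQ' = cube_side_lebesgue[OF cube_side_translation[OF Q, of v], folded Q'_def]
  have Q'X: "indicator Q' \<in> X"
    using dominates_averages_indicator_in[OF X T D[folded Q'_def] cQ'(1) C cQ(1-3)] .
  have q_Q': "0 < q (indicator Q')" using qbfs_indicator_pos[OF X Q'X cQ'(1,4)] .
  have Q'_int: "integrable lebesgue (indicator Q' :: _ \<Rightarrow> real)"
    and Q'_avg: "(\<integral>y. indicator Q' y \<partial>lebesgue) / measure lebesgue Q' = 1"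
    using cQ'(1-3) by auto
  have "\<forall>y. 0 \<le> (indicator Q' y :: real)" "\<forall>y. y \<notin> Q' \<longrightarrow> (indicator Q' y :: real) = 0"
    by auto
  moreover have "0 < (\<integral>y. indicator Q' y \<partial>lebesgue :: real)"
    using Q'_avg cQ'(3) by (auto simp: divide_eq_1_iff)
  ultimately have QX: "indicator Q \<in> X" and q_Q_le: "C * q (indicator Q) \<le> M * q (indicator Q')"
    using dominates_averages_weak_bound[OF X T D'[folded Q'_def] cQ(1) C cQ'(3) Q'X Q'_int]
    unfolding Q'_avg by auto
  have q_Q: "0 < q (indicator Q)" using qbfs_indicator_pos[OF X QX cQ(1,4)] .
  have kothe: "kothe_norm X q (indicator Q) \<le> ennreal (M * measure lebesgue Q / (C * q (indicator Q')))"
    using dominates_averages_kothe_norm_le[OF X T D[folded Q'_def] cQ'(1) q_Q' C cQ(1-3)] .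
  have "ennreal (q (indicator Q) / measure lebesgue Q) * kothe_norm X q (indicator Q)
      \<le> ennreal (q (indicator Q) / measure lebesgue Q) * ennreal (M * measure lebesgue Q / (C * q (indicator Q')))"
    by (rule mult_left_mono[OF kothe]) simp
  also have "\<dots> = ennreal (M * q (indicator Q) / (C * q (indicator Q')))"
    using q_Q_le q_Q q_Q' C M cQ(3) by (subst ennreal_mult[symmetric]) auto
  also have "\<dots> \<le> ennreal (M\<^sup>2 / C\<^sup>2)"
  proof (rule ennreal_leI)
    have "M * (C * q (indicator Q)) \<le> M * (M * q (indicator Q'))"
      using q_Q_le M by (rule mult_left_mono)
    then show "M * q (indicator Q) / (C * q (indicator Q')) \<le> M\<^sup>2 / C\<^sup>2"
      using C q_Q' by (simp add: field_simps power2_eq_square)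
  qed
  finally have A: "ennreal (q (indicator Q) / measure lebesgue Q) * kothe_norm X q (indicator Q)
      \<le> ennreal (M\<^sup>2 / C\<^sup>2)" .
  have "in_kothe_dual X q (indicator Q)"
    using cQ(1) le_less_trans[OF kothe ennreal_less_top] unfolding in_kothe_dual_def by simp
  with QX A show ?thesis by blast
qed

theorem proposition3p4:
  fixes X :: "('a::euclidean_space \<Rightarrow> real) set"
    and q :: "('a \<Rightarrow> real) \<Rightarrow> real"
    and T :: "('a \<Rightarrow> real) \<Rightarrow> ('a \<Rightarrow> real)"
    and C :: real
  assumes "qbfs X q"
    and "fatou_property X q"
    and "sublinear_on X T"
    and "nondegenerate T C"
    and "bounded_to_weak X q T"
  shows "in_class_A X q \<and> A_const X q \<le> ennreal ((op_norm_weak X q T)\<^sup>2 / C\<^sup>2)"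
proof -
  have cube_bound: "indicator Q \<in> X \<and> in_kothe_dual X q (indicator Q) \<and>
      ennreal (q (indicator Q) / measure lebesgue Q) * kothe_norm X q (indicator Q)
        \<le> ennreal ((op_norm_weak X q T)\<^sup>2 / C\<^sup>2)" if "cube Q" for Q
    using that cube_side_A_bound[OF assms(1) weak_bound_op_norm_weak[OF assms(1,5)] assms(4)]
    unfolding cube_def by blast
  then have A: "A_const X q \<le> ennreal ((op_norm_weak X q T)\<^sup>2 / C\<^sup>2)"
    unfolding A_const_def by (intro SUP_least) auto
  then have "A_const X q < \<infinity>" using le_less_trans[OF A ennreal_less_top] by simp
  with A cube_bound show ?thesis unfolding in_class_A_def by blast
qed

end
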